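(* Consider a batch contextual bandit with finite context (state) space $\mathcal{S}$, finite action space $\mathcal{A}$, context distribution $d_0\in\Delta(\mathcal{S})$ and reward distributions $R(s,a)\in\Delta([0,R_{\max}])$. Let $\pi_b$ be a behavior policy, $\mu:=d_0\times\pi_b$, and let $\mathcal{F}$ be a finite class of functions $\mathcal{S}\times\mathcal{A}\to[0,R_{\max}]$. Let $\hat f\in\mathcal{F}$ satisfy $\mathcal{L}_\mu(\hat f)-\min_{f\in\mathcal{F}}\mathcal{L}_\mu(f)\le\epsilon$. Assume (i) there is a constant $C<+\infty$ with $\pi_b(a\mid s)\ge 1/C$ for all $s\in\mathcal{S},a\in\mathcal{A}$, and (ii) $Q^\star\in\mathcal{F}$, where $Q^\star(s,a)=\mathbb{E}_{r\sim R(s,a)}[r]$. Then $$v^{\pi_{\hat f}}\ \ge\ v^\star-2\sqrt{C\epsilon}.$$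
   Context: The behavior policy $\pi_b:\mathcal{S}\to\Delta(\mathcal{A})$ generates data $s\sim d_0$, $a\sim\pi_b(\cdot\mid s)$, $r\sim R(s,a)$; $\mu$ is the resulting joint distribution of $(s,a)$. The population squared loss is $\mathcal{L}_\mu(f):=\mathbb{E}_{(s,a)\sim\mu,\,r\sim R(s,a)}[(f(s,a)-r)^2]$. For a function $f$, $\pi_f$ is its greedy policy $s\mapsto\arg\max_{a\in\mathcal{A}}f(s,a)$ (ties broken by a fixed rule). For a deterministic policy $\pi$, $v^\pi:=\mathbb{E}_{s\sim d_0,\,r\sim R(s,\pi(s))}[r]$, and $v^\star:=\mathbb{E}_{s\sim d_0}[\max_{a}Q^\star(s,a)]$ is the optimal value. *)

theory Defs
  imports "HOL-Probability.Probability"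
begin

definition Qstar :: "('s \<Rightarrow> 'a \<Rightarrow> real measure) \<Rightarrow> 's \<Rightarrow> 'a \<Rightarrow> real" where
  "Qstar R s a = (\<integral>r. r \<partial>(R s a))"

definition sq_loss :: "'s::finite pmf \<Rightarrow> ('s \<Rightarrow> 'a::finite pmf) \<Rightarrow> ('s \<Rightarrow> 'a \<Rightarrow> real measure)
    \<Rightarrow> ('s \<Rightarrow> 'a \<Rightarrow> real) \<Rightarrow> real" where
  "sq_loss d0 pib R f =
     (\<Sum>s\<in>UNIV. \<Sum>a\<in>UNIV. pmf d0 s * pmf (pib s) a * (\<integral>r. (f s a - r)\<^sup>2 \<partial>(R s a)))"

definition greedy :: "('s \<Rightarrow> 'a::finite \<Rightarrow> real) \<Rightarrow> 's \<Rightarrow> 'a" where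
  "greedy f s = (SOME a. \<forall>b. f s b \<le> f s a)"

definition value_of :: "'s::finite pmf \<Rightarrow> ('s \<Rightarrow> 'a \<Rightarrow> real measure) \<Rightarrow> ('s \<Rightarrow> 'a) \<Rightarrow> real" where
  "value_of d0 R pol = (\<Sum>s\<in>UNIV. pmf d0 s * (\<integral>r. r \<partial>(R s (pol s))))"

definition opt_value :: "'s::finite pmf \<Rightarrow> ('s \<Rightarrow> 'a::finite \<Rightarrow> real measure) \<Rightarrow> real" where
  "opt_value d0 R = (\<Sum>s\<in>UNIV. pmf d0 s * (MAX a\<in>UNIV. Qstar R s a))"

end

theory Submission
  imports Defs
begin

text \<open>Since Q* is the conditional mean of the reward, the excess squared loss of f over Q* is the
  \<mu>-weighted squared error of f - Q*. Uniform coverage 1/C of the behaviour policy turns this into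
  a bound C \<epsilon> on the squared error along any deterministic policy, hence (Cauchy-Schwarz) into a
  bound sqrt (C \<epsilon>) on the d0-averaged absolute error. The regret of the greedy policy of f is at
  most the error along the optimal policy plus the error along the greedy one. Boundedness of the
  rewards only serves integrability.\<close>

lemma integrable_power_of_bounded_support:
  fixes M :: "real measure"
  assumes "prob_space M" and "sets M = sets borel" and "measure M {0..b} = 1"
  shows "integrable M (\<lambda>r. r ^ n)"
proof -
  interpret prob_space M by fact
  have "AE r in M. r \<in> {0..b}"
    using AE_prob_1 assms(3) .
  then have "AE r in M. norm (r ^ n) \<le> b ^ n"
    by (rule eventually_mono) (auto intro: power_mono)
  moreover have "(\<lambda>r::real. r ^ n) \<in> borel_measurable M"
    unfolding measurable_cong_sets[OF assms(2) refl] by simp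
  ultimately show ?thesis
    by (intro integrable_const_bound[where B = "b ^ n"]) auto
qed

lemma integral_square_diff_expand:
  fixes M :: "real measure"
  assumes "prob_space M" and "integrable M (\<lambda>r. r)" and "integrable M (\<lambda>r. r\<^sup>2)"
  shows "(\<integral>r. (c - r)\<^sup>2 \<partial>M) = c\<^sup>2 - 2 * c * (\<integral>r. r \<partial>M) + (\<integral>r. r\<^sup>2 \<partial>M)"
proof -
  interpret prob_space M by fact
  have "(\<integral>r. (c - r)\<^sup>2 \<partial>M) = (\<integral>r. (c\<^sup>2 - 2 * c * r) + r\<^sup>2 \<partial>M)"
    by (simp add: power2_diff algebra_simps)
  also have "\<dots> = (\<integral>r. c\<^sup>2 - 2 * c * r \<partial>M) + (\<integral>r. r\<^sup>2 \<partial>M)"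
    using assms by (intro Bochner_Integration.integral_add) auto
  also have "(\<integral>r. c\<^sup>2 - 2 * c * r \<partial>M) = c\<^sup>2 - 2 * c * (\<integral>r. r \<partial>M)"
    using assms by (subst Bochner_Integration.integral_diff) (auto simp: prob_space)
  finally show ?thesis .
qed

lemma excess_square_loss_over_mean:
  fixes M :: "real measure"
  assumes "prob_space M" and "integrable M (\<lambda>r. r)" and "integrable M (\<lambda>r. r\<^sup>2)"
  shows "(\<integral>r. (c - r)\<^sup>2 \<partial>M) - (\<integral>r. ((\<integral>r. r \<partial>M) - r)\<^sup>2 \<partial>M) = (c - (\<integral>r. r \<partial>M))\<^sup>2"
  unfolding integral_square_diff_expand[OF assms] by (simp add: power2_eq_square algebra_simps)

lemma sq_loss_minus_sq_loss_Qstar: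
  assumes "\<And>s a. prob_space (R s a)"
    and "\<And>s a. integrable (R s a) (\<lambda>r. r)" and "\<And>s a. integrable (R s a) (\<lambda>r. r\<^sup>2)"
  shows "sq_loss d0 pib R f - sq_loss d0 pib R (Qstar R)
    = (\<Sum>s\<in>UNIV. \<Sum>a\<in>UNIV. pmf d0 s * pmf (pib s) a * (f s a - Qstar R s a)\<^sup>2)"
  unfolding sq_loss_def sum_subtractf[symmetric] right_diff_distrib[symmetric]
  using excess_square_loss_over_mean[OF assms] by (simp add: Qstar_def)

lemma sum_pmf_abs_le_sqrt_sum_pmf_square:
  fixes p :: "'x::finite pmf"
  shows "(\<Sum>x\<in>UNIV. pmf p x * \<bar>h x\<bar>) \<le> sqrt (\<Sum>x\<in>UNIV. pmf p x * (h x)\<^sup>2)"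
proof -
  have "(\<Sum>x\<in>UNIV. sqrt (pmf p x) * (sqrt (pmf p x) * \<bar>h x\<bar>))\<^sup>2
      \<le> (\<Sum>x\<in>UNIV. (sqrt (pmf p x))\<^sup>2) * (\<Sum>x\<in>UNIV. (sqrt (pmf p x) * \<bar>h x\<bar>)\<^sup>2)"
    by (rule Cauchy_Schwarz_ineq_sum)
  also have "\<dots> = (\<Sum>x\<in>UNIV. pmf p x * (h x)\<^sup>2)"
    by (simp add: sum_pmf_eq_1 power_mult_distrib)
  finally have "(\<Sum>x\<in>UNIV. pmf p x * \<bar>h x\<bar>)\<^sup>2 \<le> (\<Sum>x\<in>UNIV. pmf p x * (h x)\<^sup>2)"
    by (simp add: mult.assoc[symmetric])
  then show ?thesis
    by (simp add: real_le_rsqrt)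
qed

lemma sum_policy_le_coverage:
  fixes d0 :: "'s::finite pmf" and pib :: "'s \<Rightarrow> 'a::finite pmf" and g :: "'s \<Rightarrow> 'a"
  assumes "0 < C" and coverage: "\<And>s a. 1 / C \<le> pmf (pib s) a" and nonneg: "\<And>s a. 0 \<le> h s a"
  shows "(\<Sum>s\<in>UNIV. pmf d0 s * h s (g s)) \<le> C * (\<Sum>s\<in>UNIV. \<Sum>a\<in>UNIV. pmf d0 s * pmf (pib s) a * h s a)"
proof -
  have "pmf d0 s * h s (g s) \<le> C * (\<Sum>a\<in>UNIV. pmf d0 s * pmf (pib s) a * h s a)" for s
  proof -
    have "1 \<le> C * pmf (pib s) (g s)"
      using coverage[of s "g s"] \<open>0 < C\<close> by (simp add: field_simps)
    then have "pmf d0 s * h s (g s) * 1 \<le> pmf d0 s * h s (g s) * (C * pmf (pib s) (g s))"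
      using nonneg by (intro mult_left_mono) auto
    also have "\<dots> = C * (pmf d0 s * pmf (pib s) (g s) * h s (g s))"
      by simp
    also have "\<dots> \<le> C * (\<Sum>a\<in>UNIV. pmf d0 s * pmf (pib s) a * h s a)"
      using \<open>0 < C\<close> nonneg by (intro mult_left_mono member_le_sum) auto
    finally show ?thesis
      by simp
  qed
  then have "(\<Sum>s\<in>UNIV. pmf d0 s * h s (g s))
      \<le> (\<Sum>s\<in>UNIV. C * (\<Sum>a\<in>UNIV. pmf d0 s * pmf (pib s) a * h s a))"
    by (rule sum_mono)
  then show ?thesis
    by (simp add: sum_distrib_left)
qed

lemma sum_policy_abs_le_sqrt_coverage:
  fixes d0 :: "'s::finite pmf" and pib :: "'s \<Rightarrow> 'a::finite pmf" and g :: "'s \<Rightarrow> 'a"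
  assumes "0 < C" and "\<And>s a. 1 / C \<le> pmf (pib s) a"
  shows "(\<Sum>s\<in>UNIV. pmf d0 s * \<bar>h s (g s)\<bar>)
    \<le> sqrt (C * (\<Sum>s\<in>UNIV. \<Sum>a\<in>UNIV. pmf d0 s * pmf (pib s) a * (h s a)\<^sup>2))"
proof -
  have "(\<Sum>s\<in>UNIV. pmf d0 s * \<bar>h s (g s)\<bar>) \<le> sqrt (\<Sum>s\<in>UNIV. pmf d0 s * (h s (g s))\<^sup>2)"
    by (rule sum_pmf_abs_le_sqrt_sum_pmf_square)
  also have "\<dots> \<le> sqrt (C * (\<Sum>s\<in>UNIV. \<Sum>a\<in>UNIV. pmf d0 s * pmf (pib s) a * (h s a)\<^sup>2))"
    using sum_policy_le_coverage[OF assms, of "\<lambda>s a. (h s a)\<^sup>2"] by simp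
  finally show ?thesis .
qed

lemma greedy_attains_Max:
  fixes f :: "'s \<Rightarrow> 'a::finite \<Rightarrow> real"
  shows "f s (greedy f s) = (MAX a\<in>UNIV. f s a)"
proof -
  have "(MAX b\<in>UNIV. f s b) \<in> range (f s)"
    by (rule Max_in) auto
  then obtain a where "f s a = (MAX b\<in>UNIV. f s b)"
    by (metis imageE)
  then have "\<forall>b. f s b \<le> f s a"
    by simp
  then have "\<exists>a. \<forall>b. f s b \<le> f s a" ..
  then have "\<forall>b. f s b \<le> f s (greedy f s)"
    unfolding greedy_def by (rule someI_ex)
  then show ?thesis
    by (intro antisym Max.boundedI) auto
qed

lemma greedy_ge: "f s b \<le> f s (greedy (f :: 's \<Rightarrow> 'a::finite \<Rightarrow> real) s)"
  unfolding greedy_attains_Max by (simp add: Max_ge)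

lemma opt_value_eq_value_of_greedy_Qstar: "opt_value d0 R = value_of d0 R (greedy (Qstar R))"
  unfolding opt_value_def value_of_def greedy_attains_Max[symmetric] Qstar_def ..

lemma regret_greedy_le:
  fixes d0 :: "'s::finite pmf" and R :: "'s \<Rightarrow> 'a::finite \<Rightarrow> real measure"
    and f :: "'s \<Rightarrow> 'a \<Rightarrow> real"
  defines "err g \<equiv> (\<Sum>s\<in>UNIV. pmf d0 s * \<bar>f s (g s) - Qstar R s (g s)\<bar>)"
  shows "opt_value d0 R - value_of d0 R (greedy f) \<le> err (greedy (Qstar R)) + err (greedy f)"
proof -
  have "Qstar R s (greedy (Qstar R) s) - Qstar R s (greedy f s)
      \<le> \<bar>f s (greedy (Qstar R) s) - Qstar R s (greedy (Qstar R) s)\<bar>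
        + \<bar>f s (greedy f s) - Qstar R s (greedy f s)\<bar>" for s
    using greedy_ge[of f s "greedy (Qstar R) s"] by linarith
  then have "(\<Sum>s\<in>UNIV. pmf d0 s * (Qstar R s (greedy (Qstar R) s) - Qstar R s (greedy f s)))
      \<le> err (greedy (Qstar R)) + err (greedy f)"
    unfolding err_def sum.distrib[symmetric] distrib_left[symmetric]
    by (intro sum_mono mult_left_mono) auto
  then show ?thesis
    unfolding opt_value_eq_value_of_greedy_Qstar value_of_def Qstar_def
    by (simp add: sum_subtractf[symmetric] right_diff_distrib)
qed

theorem theorem1:
  fixes d0 :: "'s::finite pmf"
    and pib :: "'s \<Rightarrow> 'a::finite pmf"
    and R :: "'s \<Rightarrow> 'a \<Rightarrow> real measure"
    and F :: "('s \<Rightarrow> 'a \<Rightarrow> real) set"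
    and fhat :: "'s \<Rightarrow> 'a \<Rightarrow> real"
    and Rmax C \<epsilon> :: real
  assumes R_prob: "\<And>s a. prob_space (R s a)"
    and R_borel: "\<And>s a. sets (R s a) = sets borel"
    and R_range: "\<And>s a. measure (R s a) {0..Rmax} = 1"
    and F_fin: "finite F"
    and F_range: "\<And>f s a. f \<in> F \<Longrightarrow> f s a \<in> {0..Rmax}"
    and fhat_in: "fhat \<in> F"
    and fhat_opt: "sq_loss d0 pib R fhat - (MIN f\<in>F. sq_loss d0 pib R f) \<le> \<epsilon>"
    and C_pos: "0 < C"
    and coverage: "\<And>s a. pmf (pib s) a \<ge> 1 / C"
    and realizable: "Qstar R \<in> F"
  shows "value_of d0 R (greedy fhat) \<ge> opt_value d0 R - 2 * sqrt (C * \<epsilon>)"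
proof -
  have "(MIN f\<in>F. sq_loss d0 pib R f) \<le> sq_loss d0 pib R (Qstar R)"
    by (intro Min_le finite_imageI imageI F_fin realizable)
  moreover have "sq_loss d0 pib R fhat - sq_loss d0 pib R (Qstar R)
      = (\<Sum>s\<in>UNIV. \<Sum>a\<in>UNIV. pmf d0 s * pmf (pib s) a * (fhat s a - Qstar R s a)\<^sup>2)"
    using integrable_power_of_bounded_support[OF R_prob R_borel R_range, where n = 1]
      integrable_power_of_bounded_support[OF R_prob R_borel R_range, where n = 2]
    by (intro sq_loss_minus_sq_loss_Qstar R_prob) simp_all
  ultimately have excess: "(\<Sum>s\<in>UNIV. \<Sum>a\<in>UNIV. pmf d0 s * pmf (pib s) a * (fhat s a - Qstar R s a)\<^sup>2) \<le> \<epsilon>"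
    using fhat_opt by linarith
  have error_along: "(\<Sum>s\<in>UNIV. pmf d0 s * \<bar>fhat s (g s) - Qstar R s (g s)\<bar>) \<le> sqrt (C * \<epsilon>)"
    for g :: "'s \<Rightarrow> 'a"
  proof -
    have "(\<Sum>s\<in>UNIV. pmf d0 s * \<bar>fhat s (g s) - Qstar R s (g s)\<bar>)
        \<le> sqrt (C * (\<Sum>s\<in>UNIV. \<Sum>a\<in>UNIV. pmf d0 s * pmf (pib s) a * (fhat s a - Qstar R s a)\<^sup>2))"
      by (rule sum_policy_abs_le_sqrt_coverage[OF C_pos coverage])
    also have "\<dots> \<le> sqrt (C * \<epsilon>)"
      using excess C_pos by simp
    finally show ?thesis .
  qed
  show ?thesis
    using regret_greedy_le[of d0 R fhat] error_along[of "greedy (Qstar R)"] error_along[of "greedy fhat"]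
    by linarith
qed

end
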